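(* Let $D$ be a link diagram and $\Gamma$ its associated fat-vertex graph. Then $\omega(\Gamma)\geq\omega(D)$.
   Context: Wirtinger number of a diagram: view $D$ (with $n$ crossings) as a union of $n$ strands (arcs between undercrossings); two strands are adjacent if they are the two under-strands at some crossing. A partial coloring is a nonempty subset $A$ of the set $S(D)$ of strands. A coloring move $A_1\to A_2$ is allowed if $A_2\setminus A_1=\{s_j\}$ is a single strand and $s_j$ is adjacent to some $s_i\in A_1$ at a crossing whose over-strand $s_k$ lies in $A_1$. $D$ is $k$-colorable if there is a $k$-element set $A_0\subset S(D)$ and a sequence of $n-k$ coloring moves $A_0\to\cdots\to A_{n-k}=S(D)$; $\omega(D)$ is the least such $k$. Fat-vertex graph: from $D$ and a checkerboard spanning surface $F$ (a union of disks and twisted bands), form the planar graph whose vertices are the disks of $F$, drawn as disjoint closed disks ("fat vertices"), and whose edges are the cores of the bands. A segment of $\Gamma$ is either an edge or a connected arc of $\partial v\setminus\{\text{endpoints of edges}\}$ for a fat vertex $v$; let $S(\Gamma)$ be the set of segments ($m$ elements) and $e(\Gamma)$ the set of edges. For $A_1\subset A_2\subset S(\Gamma)$ with $A_2\setminus A_1=\{s\}$, a coloring move $A_1\to A_2$ is allowed if either (1) $s$ is an edge and both boundary segments adjacent to $s$ at one of its (same) vertex are in $A_1$, or (2) $s$ is an arc in the boundary of a fat vertex and is incident to an edge in $A_1$. $\Gamma$ is $k$-colorable if there is a $k$-element set $A_0\subset S(\Gamma)\setminus e(\Gamma)$ and a sequence of $m-k$ coloring moves ending at $S(\Gamma)$;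 $\omega(\Gamma)$ is the least such $k$. *)

theory Defs
  imports "HOL-Combinatorics.Permutations"
begin

text \<open>A link diagram with n >= 1 crossings whose projection is connected is encoded
  as a 4-valent combinatorial map on a finite set H of darts (half-edges):
  sigma rotates the four darts around each crossing (cyclic order in the plane),
  alpha is the fixed-point-free involution pairing the two ends of each edge of the
  projection; faces are the orbits of sigma o alpha.  Planarity (embedding in the
  sphere) is the Euler condition V - E + F = 2 for the connected map.  The crossing
  information is the set Ov of over-darts: at each crossing exactly one of the two
  pairs of opposite darts {h, sigma^2 h} is the over-strand.\<close>

definition orb :: "('a \<Rightarrow> 'a) \<Rightarrow> 'a \<Rightarrow> 'a set" where
  "orb f x = {(f ^^ k) x | k. True}"

definition map_vertices :: "'h set \<Rightarrow> ('h \<Rightarrow> 'h) \<Rightarrow> 'h set set" where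
  "map_vertices H \<sigma> = orb \<sigma> ` H"

definition map_edges :: "'h set \<Rightarrow> ('h \<Rightarrow> 'h) \<Rightarrow> 'h set set" where
  "map_edges H \<alpha> = orb \<alpha> ` H"

definition map_faces :: "'h set \<Rightarrow> ('h \<Rightarrow> 'h) \<Rightarrow> ('h \<Rightarrow> 'h) \<Rightarrow> 'h set set" where
  "map_faces H \<sigma> \<alpha> = orb (\<sigma> \<circ> \<alpha>) ` H"

definition map_connected :: "'h set \<Rightarrow> ('h \<Rightarrow> 'h) \<Rightarrow> ('h \<Rightarrow> 'h) \<Rightarrow> bool" where
  "map_connected H \<sigma> \<alpha> \<longleftrightarrow>
     (\<forall>g\<in>H. \<forall>h\<in>H. (g, h) \<in> ({(x, \<sigma> x) | x. x \<in> H} \<union> {(x, \<alpha> x) | x. x \<in> H})\<^sup>*)"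

definition link_diagram :: "'h set \<Rightarrow> ('h \<Rightarrow> 'h) \<Rightarrow> ('h \<Rightarrow> 'h) \<Rightarrow> 'h set \<Rightarrow> bool" where
  "link_diagram H \<sigma> \<alpha> Ov \<longleftrightarrow>
     finite H \<and> H \<noteq> {} \<and>
     \<sigma> permutes H \<and> \<alpha> permutes H \<and>
     (\<forall>h\<in>H. \<alpha> h \<noteq> h \<and> \<alpha> (\<alpha> h) = h) \<and>
     (\<forall>h\<in>H. \<sigma> h \<noteq> h \<and> (\<sigma> ^^ 2) h \<noteq> h \<and> (\<sigma> ^^ 4) h = h) \<and>
     map_connected H \<sigma> \<alpha> \<and>
     int (card (map_vertices H \<sigma>)) - int (card (map_edges H \<alpha>))
       + int (card (map_faces H \<sigma> \<alpha>)) = 2 \<and>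
     Ov \<subseteq> H \<and>
     (\<forall>h\<in>H. (\<sigma> (\<sigma> h) \<in> Ov \<longleftrightarrow> h \<in> Ov) \<and> (\<sigma> h \<in> Ov \<longleftrightarrow> h \<notin> Ov))"

inductive reach :: "('s set \<Rightarrow> 's \<Rightarrow> bool) \<Rightarrow> 's set \<Rightarrow> 's set \<Rightarrow> bool"
  for mv :: "'s set \<Rightarrow> 's \<Rightarrow> bool" where
  refl: "reach mv A A"
| step: "reach mv A0 A \<Longrightarrow> s \<notin> A \<Longrightarrow> mv A s \<Longrightarrow> reach mv A0 (insert s A)"

text \<open>Strands: arcs between undercrossings.  Two darts lie on the same strand if they
  are joined by a chain of edges of the projection and over-passes
  (h, sigma^2 h with h an over-dart).\<close>

definition strand :: "'h set \<Rightarrow> ('h \<Rightarrow> 'h) \<Rightarrow> ('h \<Rightarrow> 'h) \<Rightarrow> 'h set \<Rightarrow> 'h \<Rightarrow> 'h set" where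
  "strand H \<sigma> \<alpha> Ov h =
     (let R = {(x, \<alpha> x) | x. x \<in> H} \<union> {(x, \<sigma> (\<sigma> x)) | x. x \<in> Ov}
      in {g. (h, g) \<in> (R \<union> R\<inverse>)\<^sup>*})"

definition strands :: "'h set \<Rightarrow> ('h \<Rightarrow> 'h) \<Rightarrow> ('h \<Rightarrow> 'h) \<Rightarrow> 'h set \<Rightarrow> 'h set set" where
  "strands H \<sigma> \<alpha> Ov = strand H \<sigma> \<alpha> Ov ` H"

text \<open>At the crossing with over-dart h the over-strand is the strand of h and the two
  under-strands are the strands of sigma h and sigma^3 h.\<close>

definition diagram_move :: "'h set \<Rightarrow> ('h \<Rightarrow> 'h) \<Rightarrow> ('h \<Rightarrow> 'h) \<Rightarrow> 'h set \<Rightarrow> 'h set set \<Rightarrow> 'h set \<Rightarrow> bool" where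
  "diagram_move H \<sigma> \<alpha> Ov A s \<longleftrightarrow>
     (\<exists>h\<in>Ov. strand H \<sigma> \<alpha> Ov h \<in> A \<and>
        ((strand H \<sigma> \<alpha> Ov (\<sigma> h) \<in> A \<and> s = strand H \<sigma> \<alpha> Ov (\<sigma> (\<sigma> (\<sigma> h)))) \<or>
         (strand H \<sigma> \<alpha> Ov (\<sigma> (\<sigma> (\<sigma> h))) \<in> A \<and> s = strand H \<sigma> \<alpha> Ov (\<sigma> h))))"

definition diagram_colorable :: "'h set \<Rightarrow> ('h \<Rightarrow> 'h) \<Rightarrow> ('h \<Rightarrow> 'h) \<Rightarrow> 'h set \<Rightarrow> nat \<Rightarrow> bool" where
  "diagram_colorable H \<sigma> \<alpha> Ov k \<longleftrightarrow>
     (\<exists>A0. A0 \<subseteq> strands H \<sigma> \<alpha> Ov \<and> A0 \<noteq> {} \<and> card A0 = k \<and>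
           reach (diagram_move H \<sigma> \<alpha> Ov) A0 (strands H \<sigma> \<alpha> Ov))"

definition wirtinger_diagram :: "'h set \<Rightarrow> ('h \<Rightarrow> 'h) \<Rightarrow> ('h \<Rightarrow> 'h) \<Rightarrow> 'h set \<Rightarrow> nat" where
  "wirtinger_diagram H \<sigma> \<alpha> Ov = (LEAST k. diagram_colorable H \<sigma> \<alpha> Ov k)"

text \<open>An abstract fat-vertex graph is given by its set of segments Seg, the subset Eg of
  segments that are edges, the relation ends e a b (a, b are the two boundary segments
  adjacent to the edge e at one of its ends), and the incidence relation inc a e
  (boundary arc a is incident to edge e).\<close>

definition fat_move :: "'s set \<Rightarrow> 's set \<Rightarrow> ('s \<Rightarrow> 's \<Rightarrow> 's \<Rightarrow> bool) \<Rightarrow> ('s \<Rightarrow> 's \<Rightarrow> bool)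
    \<Rightarrow> 's set \<Rightarrow> 's \<Rightarrow> bool" where
  "fat_move Seg Eg ends inc A s \<longleftrightarrow>
     (s \<in> Eg \<and> (\<exists>a b. ends s a b \<and> a \<in> A \<and> b \<in> A)) \<or>
     (s \<in> Seg - Eg \<and> (\<exists>e\<in>Eg. inc s e \<and> e \<in> A))"

definition fat_colorable :: "'s set \<Rightarrow> 's set \<Rightarrow> ('s \<Rightarrow> 's \<Rightarrow> 's \<Rightarrow> bool) \<Rightarrow> ('s \<Rightarrow> 's \<Rightarrow> bool)
    \<Rightarrow> nat \<Rightarrow> bool" where
  "fat_colorable Seg Eg ends inc k \<longleftrightarrow>
     (\<exists>A0. A0 \<subseteq> Seg - Eg \<and> card A0 = k \<and> reach (fat_move Seg Eg ends inc) A0 Seg)"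

definition wirtinger_fat :: "'s set \<Rightarrow> 's set \<Rightarrow> ('s \<Rightarrow> 's \<Rightarrow> 's \<Rightarrow> bool) \<Rightarrow> ('s \<Rightarrow> 's \<Rightarrow> bool) \<Rightarrow> nat" where
  "wirtinger_fat Seg Eg ends inc = (LEAST k. fat_colorable Seg Eg ends inc k)"

text \<open>A checkerboard shading is a set Sh of darts, a union of faces (orbits of
  sigma o alpha), such that the two sides of every edge have different shading
  (the face of h lies on one side of the edge {h, alpha h}, the face of alpha h on the
  other).  The corner between darts d and sigma d belongs to the face of sigma d.
  The checkerboard surface consists of the shaded faces (disks = fat vertices) and one
  twisted band per crossing joining its two shaded corners.  Hence the segments of
  the fat-vertex graph are: one edge per crossing (Inl v) and one boundary arc per
  edge of the projection (Inr e), since each projection edge lies on the boundary of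
  exactly one shaded face, between the band attachments at its two end crossings.\<close>

definition checkerboard :: "'h set \<Rightarrow> ('h \<Rightarrow> 'h) \<Rightarrow> ('h \<Rightarrow> 'h) \<Rightarrow> 'h set \<Rightarrow> bool" where
  "checkerboard H \<sigma> \<alpha> Sh \<longleftrightarrow>
     Sh \<subseteq> H \<and> (\<forall>h\<in>H. (\<sigma> (\<alpha> h) \<in> Sh \<longleftrightarrow> h \<in> Sh) \<and> (\<alpha> h \<in> Sh \<longleftrightarrow> h \<notin> Sh))"

definition fvg_segments :: "'h set \<Rightarrow> ('h \<Rightarrow> 'h) \<Rightarrow> ('h \<Rightarrow> 'h) \<Rightarrow> ('h set + 'h set) set" where
  "fvg_segments H \<sigma> \<alpha> = Inl ` map_vertices H \<sigma> \<union> Inr ` map_edges H \<alpha>"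

definition fvg_edges :: "'h set \<Rightarrow> ('h \<Rightarrow> 'h) \<Rightarrow> ('h set + 'h set) set" where
  "fvg_edges H \<sigma> = Inl ` map_vertices H \<sigma>"

definition fvg_ends :: "'h set \<Rightarrow> ('h \<Rightarrow> 'h) \<Rightarrow> ('h \<Rightarrow> 'h) \<Rightarrow> 'h set
    \<Rightarrow> ('h set + 'h set) \<Rightarrow> ('h set + 'h set) \<Rightarrow> ('h set + 'h set) \<Rightarrow> bool" where
  "fvg_ends H \<sigma> \<alpha> Sh s a b \<longleftrightarrow>
     (\<exists>d\<in>H. s = Inl (orb \<sigma> d) \<and> \<sigma> d \<in> Sh \<and>
            a = Inr (orb \<alpha> d) \<and> b = Inr (orb \<alpha> (\<sigma> d)))"

definition fvg_inc :: "('h set + 'h set) \<Rightarrow> ('h set + 'h set) \<Rightarrow> bool" where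
  "fvg_inc a e \<longleftrightarrow> (\<exists>x v. a = Inr x \<and> e = Inl v \<and> x \<inter> v \<noteq> {})"

definition wirtinger_fvg :: "'h set \<Rightarrow> ('h \<Rightarrow> 'h) \<Rightarrow> ('h \<Rightarrow> 'h) \<Rightarrow> 'h set \<Rightarrow> nat" where
  "wirtinger_fvg H \<sigma> \<alpha> Sh =
     wirtinger_fat (fvg_segments H \<sigma> \<alpha>) (fvg_edges H \<sigma>) (fvg_ends H \<sigma> \<alpha> Sh) fvg_inc"

end

theory Submission
  imports Defs
begin

(* Send a set of segments of the fat-vertex graph to the set of strands of D meeting it.
  A boundary arc runs along a single edge of the projection, hence meets one strand, so an
  initial coloring by k arcs gives at most k strands.  Coloring an arc incident to a colored
  band adds no strand: the arc meets the band's crossing, whose strands are all colored.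
  Coloring a band from its two adjacent arcs colors the strands of two consecutive darts at a
  crossing; one of them is the over-strand and the other an under-strand, so a single
  Wirtinger move colors the remaining under-strand.  Thus every coloring of the graph is
  simulated by a coloring of D with at most as many initial colors. *)

lemma orb_self: "x \<in> orb f x"
  unfolding orb_def by (auto intro: exI[of _ 0])

lemma orb_periodic:
  assumes "(f ^^ n) x = x" and "0 < n"
  shows "orb f x = (\<lambda>k. (f ^^ k) x) ` {..<n}"
proof -
  have "(f ^^ k) x \<in> (\<lambda>k. (f ^^ k) x) ` {..<n}" for k
    using funpow_mod_eq[OF assms(1)] assms(2) by (metis imageI lessThan_iff mod_less_divisor)
  then show ?thesis
    unfolding orb_def by auto
qed

lemma orb_involution:
  assumes "f (f x) = x"
  shows "orb f x = {x, f x}"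
  using orb_periodic[where n = 2] assms by (simp add: numeral_2_eq_2 lessThan_Suc insert_commute)

lemma orb_order_four:
  assumes "f (f (f (f x))) = x"
  shows "orb f x = {x, f x, f (f x), f (f (f x))}"
  using orb_periodic[where n = 4] assms by (simp add: eval_nat_numeral lessThan_Suc insert_commute)

lemma sym_rtrancl_class_eq:
  assumes "sym S" and "(x, y) \<in> S"
  shows "{z. (x, z) \<in> S\<^sup>*} = {z. (y, z) \<in> S\<^sup>*}"
proof -
  have "(y, x) \<in> S"
    using assms by (meson symD)
  with assms(2) show ?thesis
    by (auto intro: converse_rtrancl_into_rtrancl)
qed

lemma strand_step:
  assumes "(h, h') \<in> {(x, \<alpha> x) | x. x \<in> H} \<union> {(x, \<sigma> (\<sigma> x)) | x. x \<in> Ov}"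
  shows "strand H \<sigma> \<alpha> Ov h' = strand H \<sigma> \<alpha> Ov h"
  unfolding strand_def Let_def
  by (rule sym_rtrancl_class_eq[symmetric]) (use assms in \<open>auto simp: sym_Un_converse\<close>)

lemma strand_alpha: "h \<in> H \<Longrightarrow> strand H \<sigma> \<alpha> Ov (\<alpha> h) = strand H \<sigma> \<alpha> Ov h"
  by (rule strand_step) auto

lemma strand_over: "h \<in> Ov \<Longrightarrow> strand H \<sigma> \<alpha> Ov (\<sigma> (\<sigma> h)) = strand H \<sigma> \<alpha> Ov h"
  by (rule strand_step) auto

lemma reach_insert: "reach mv A0 A \<Longrightarrow> (s \<notin> A \<Longrightarrow> mv A s) \<Longrightarrow> reach mv A0 (insert s A)"
  by (cases "s \<in> A") (auto simp: insert_absorb intro: reach.step)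

lemma reach_from_empty:
  assumes "reach mv {} A" and "\<And>s. \<not> mv {} s"
  shows "A = {}"
  using assms by (induction "{} :: 'a set" A rule: reach.induct) auto

lemma reach_union:
  assumes "finite F" and "\<And>s A. s \<in> F \<Longrightarrow> A0 \<subseteq> A \<Longrightarrow> mv A s"
  shows "reach mv A0 (A0 \<union> F)"
  using assms
proof (induction F rule: finite_induct)
  case empty
  show ?case by (simp add: reach.refl)
next
  case (insert s F)
  then have "reach mv A0 (insert s (A0 \<union> F))"
    by (intro reach_insert) auto
  then show ?case by simp
qed

lemma reach_simulation:
  assumes "reach mv A0 A"
    and "\<And>A s. mv A s \<Longrightarrow>
      f (insert s A) = f A \<or> (\<exists>t. mv' (f A) t \<and> f (insert s A) = insert t (f A))"
  shows "reach mv' (f A0) (f A)"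
  using assms(1)
proof (induction rule: reach.induct)
  case refl
  show ?case by (rule reach.refl)
next
  case (step _ A s)
  with assms(2) consider "f (insert s A) = f A"
    | t where "mv' (f A) t" "f (insert s A) = insert t (f A)"
    by blast
  then show ?case
    using step.IH by cases (auto intro: reach_insert)
qed

fun segment_darts :: "'h set + 'h set \<Rightarrow> 'h set" where
  "segment_darts (Inl v) = v"
| "segment_darts (Inr x) = x"

definition covered_strands ::
    "'h set \<Rightarrow> ('h \<Rightarrow> 'h) \<Rightarrow> ('h \<Rightarrow> 'h) \<Rightarrow> 'h set \<Rightarrow> ('h set + 'h set) set \<Rightarrow> 'h set set" where
  "covered_strands H \<sigma> \<alpha> Ov A = strand H \<sigma> \<alpha> Ov ` \<Union> (segment_darts ` A)"

lemma covered_strands_insert: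
  "covered_strands H \<sigma> \<alpha> Ov (insert s A) =
     strand H \<sigma> \<alpha> Ov ` segment_darts s \<union> covered_strands H \<sigma> \<alpha> Ov A"
  by (simp add: covered_strands_def image_Un)

lemma covered_strandsI:
  "a \<in> A \<Longrightarrow> h \<in> segment_darts a \<Longrightarrow> strand H \<sigma> \<alpha> Ov h \<in> covered_strands H \<sigma> \<alpha> Ov A"
  unfolding covered_strands_def by (intro imageI UnionI[OF imageI[of a A segment_darts]])

lemma covered_strands_mono:
  "A \<subseteq> B \<Longrightarrow> covered_strands H \<sigma> \<alpha> Ov A \<subseteq> covered_strands H \<sigma> \<alpha> Ov B"
  unfolding covered_strands_def by blast

context
  fixes H :: "'h set" and \<sigma> \<alpha> :: "'h \<Rightarrow> 'h" and Ov :: "'h set"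
  assumes diagram: "link_diagram H \<sigma> \<alpha> Ov"
begin

lemma diagram_closed: "h \<in> H \<Longrightarrow> \<sigma> h \<in> H" "h \<in> H \<Longrightarrow> \<alpha> h \<in> H"
  using diagram unfolding link_diagram_def by (auto simp: permutes_in_image)

lemma alpha_alpha: "h \<in> H \<Longrightarrow> \<alpha> (\<alpha> h) = h"
  using diagram unfolding link_diagram_def by blast

lemma sigma_order_four: "h \<in> H \<Longrightarrow> \<sigma> (\<sigma> (\<sigma> (\<sigma> h))) = h"
  using diagram unfolding link_diagram_def by (auto simp: eval_nat_numeral)

lemma over_alternates: "h \<in> H \<Longrightarrow> \<sigma> h \<in> Ov \<longleftrightarrow> h \<notin> Ov"
  using diagram unfolding link_diagram_def by blast

lemma orb_alpha: "h \<in> H \<Longrightarrow> orb \<alpha> h = {h, \<alpha> h}"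
  by (simp add: orb_involution alpha_alpha)

lemma orb_sigma: "d \<in> H \<Longrightarrow> orb \<sigma> d = {d, \<sigma> d, \<sigma> (\<sigma> d), \<sigma> (\<sigma> (\<sigma> d))}"
  by (simp add: orb_order_four sigma_order_four)

lemma strands_orb_alpha: "h \<in> H \<Longrightarrow> strand H \<sigma> \<alpha> Ov ` orb \<alpha> h = {strand H \<sigma> \<alpha> Ov h}"
  by (simp add: orb_alpha strand_alpha)

lemma diagram_move_at_crossing:
  assumes "d \<in> H" and "strand H \<sigma> \<alpha> Ov d \<in> B" and "strand H \<sigma> \<alpha> Ov (\<sigma> d) \<in> B"
  obtains t where "diagram_move H \<sigma> \<alpha> Ov B t"
    and "insert t B = B \<union> strand H \<sigma> \<alpha> Ov ` orb \<sigma> d"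
proof (cases "d \<in> Ov")
  case True
  have "diagram_move H \<sigma> \<alpha> Ov B (strand H \<sigma> \<alpha> Ov (\<sigma> (\<sigma> (\<sigma> d))))"
    unfolding diagram_move_def using True assms by auto
  moreover have "strand H \<sigma> \<alpha> Ov (\<sigma> (\<sigma> d)) = strand H \<sigma> \<alpha> Ov d"
    using strand_over[OF True] .
  ultimately show ?thesis
    using that assms unfolding orb_sigma[OF assms(1)] by auto
next
  case False
  then have over: "\<sigma> d \<in> Ov"
    using over_alternates assms(1) by blast
  have "diagram_move H \<sigma> \<alpha> Ov B (strand H \<sigma> \<alpha> Ov (\<sigma> (\<sigma> d)))"
    unfolding diagram_move_def using over assms sigma_order_four[OF assms(1)] by auto
  moreover have "strand H \<sigma> \<alpha> Ov (\<sigma> (\<sigma> (\<sigma> d))) = strand H \<sigma> \<alpha> Ov (\<sigma> d)"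
    using strand_over[OF over] .
  ultimately show ?thesis
    using that assms unfolding orb_sigma[OF assms(1)] by auto
qed

lemma segment_darts_fvg_segments: "\<Union> (segment_darts ` fvg_segments H \<sigma> \<alpha>) = H"
proof -
  have "orb \<sigma> h \<subseteq> H" "orb \<alpha> h \<subseteq> H" if "h \<in> H" for h
    using that diagram_closed by (auto simp: orb_sigma orb_alpha)
  then show ?thesis
    unfolding fvg_segments_def map_vertices_def map_edges_def by (auto intro: orb_self)
qed

lemma covered_strands_fvg_segments:
  "covered_strands H \<sigma> \<alpha> Ov (fvg_segments H \<sigma> \<alpha>) = strands H \<sigma> \<alpha> Ov"
  by (simp add: covered_strands_def strands_def segment_darts_fvg_segments)

lemma fat_move_covered_strands:
  assumes "fat_move (fvg_segments H \<sigma> \<alpha>) (fvg_edges H \<sigma>) (fvg_ends H \<sigma> \<alpha> Sh) fvg_inc A s"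
  shows "covered_strands H \<sigma> \<alpha> Ov (insert s A) = covered_strands H \<sigma> \<alpha> Ov A \<or>
    (\<exists>t. diagram_move H \<sigma> \<alpha> Ov (covered_strands H \<sigma> \<alpha> Ov A) t \<and>
         covered_strands H \<sigma> \<alpha> Ov (insert s A) = insert t (covered_strands H \<sigma> \<alpha> Ov A))"
proof -
  let ?B = "covered_strands H \<sigma> \<alpha> Ov A"
  from assms consider
      (band) d where "d \<in> H" "s = Inl (orb \<sigma> d)"
        "Inr (orb \<alpha> d) \<in> A" "Inr (orb \<alpha> (\<sigma> d)) \<in> A"
    | (arc) h v where "h \<in> H" "s = Inr (orb \<alpha> h)" "Inl v \<in> A" "orb \<alpha> h \<inter> v \<noteq> {}"
    unfolding fat_move_def fvg_ends_def fvg_inc_def fvg_segments_def fvg_edges_def map_edges_def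
    by blast
  then show ?thesis
  proof cases
    case band
    have d_covered: "strand H \<sigma> \<alpha> Ov d \<in> ?B" "strand H \<sigma> \<alpha> Ov (\<sigma> d) \<in> ?B"
      using covered_strandsI[OF band(3)] covered_strandsI[OF band(4)] by (simp_all add: orb_self)
    obtain t where move: "diagram_move H \<sigma> \<alpha> Ov ?B t"
      and crossing: "insert t ?B = ?B \<union> strand H \<sigma> \<alpha> Ov ` orb \<sigma> d"
      by (rule diagram_move_at_crossing[OF band(1) d_covered])
    have "covered_strands H \<sigma> \<alpha> Ov (insert s A) = insert t ?B"
      unfolding crossing band(2) covered_strands_insert by (simp add: Un_commute)
    with move show ?thesis
      by blast
  next
    case arc
    then obtain y where y: "y \<in> orb \<alpha> h" "y \<in> v"
      by blast
    then have "strand H \<sigma> \<alpha> Ov y = strand H \<sigma> \<alpha> Ov h"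
      using strands_orb_alpha[OF arc(1)] by blast
    moreover have "strand H \<sigma> \<alpha> Ov y \<in> ?B"
      using covered_strandsI[OF arc(3)] y(2) by simp
    ultimately show ?thesis
      using arc by (simp add: covered_strands_insert strands_orb_alpha[OF arc(1)] insert_absorb)
  qed
qed

lemma checkerboard_sigma:
  assumes "checkerboard H \<sigma> \<alpha> Sh" and "h \<in> H"
  shows "\<sigma> h \<in> Sh \<longleftrightarrow> h \<notin> Sh"
proof -
  have "\<sigma> (\<alpha> (\<alpha> h)) \<in> Sh \<longleftrightarrow> \<alpha> h \<in> Sh" "\<alpha> h \<in> Sh \<longleftrightarrow> h \<notin> Sh"
    using assms diagram_closed(2)[OF assms(2)] unfolding checkerboard_def by blast+
  then show ?thesis
    using alpha_alpha[OF assms(2)] by simp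
qed

lemma crossing_shaded_corner:
  assumes "checkerboard H \<sigma> \<alpha> Sh" and "d \<in> H"
  obtains c where "c \<in> H" "orb \<sigma> c = orb \<sigma> d" "\<sigma> c \<in> Sh"
proof (cases "\<sigma> d \<in> Sh")
  case True
  with assms(2) show ?thesis
    using that by blast
next
  case False
  then have "\<sigma> (\<sigma> d) \<in> Sh"
    using checkerboard_sigma[OF assms(1)] diagram_closed(1)[OF assms(2)] by blast
  moreover have "orb \<sigma> (\<sigma> d) = orb \<sigma> d"
    using assms(2) diagram_closed(1)[OF assms(2)] sigma_order_four[OF assms(2)]
    by (auto simp: orb_sigma)
  ultimately show ?thesis
    using that diagram_closed(1)[OF assms(2)] by blast
qed

lemma fat_colorable_by_arcs:
  assumes "checkerboard H \<sigma> \<alpha> Sh"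
  shows "fat_colorable (fvg_segments H \<sigma> \<alpha>) (fvg_edges H \<sigma>) (fvg_ends H \<sigma> \<alpha> Sh) fvg_inc
    (card (fvg_segments H \<sigma> \<alpha> - fvg_edges H \<sigma>))"
proof -
  let ?Seg = "fvg_segments H \<sigma> \<alpha>" and ?Eg = "fvg_edges H \<sigma>"
  let ?mv = "fat_move ?Seg ?Eg (fvg_ends H \<sigma> \<alpha> Sh) fvg_inc"
  have arc: "Inr (orb \<alpha> h) \<in> ?Seg - ?Eg" if "h \<in> H" for h
    using that unfolding fvg_segments_def fvg_edges_def map_edges_def by blast
  have band_move: "?mv A s" if band: "s \<in> ?Eg" and arcs: "?Seg - ?Eg \<subseteq> A" for A s
  proof -
    obtain d where d: "d \<in> H" "s = Inl (orb \<sigma> d)"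
      using band unfolding fvg_edges_def map_vertices_def by blast
    obtain c where c: "c \<in> H" "orb \<sigma> c = orb \<sigma> d" "\<sigma> c \<in> Sh"
      using crossing_shaded_corner[OF assms d(1)] .
    have "fvg_ends H \<sigma> \<alpha> Sh s (Inr (orb \<alpha> c)) (Inr (orb \<alpha> (\<sigma> c)))"
      unfolding fvg_ends_def using c d by auto
    moreover have "Inr (orb \<alpha> c) \<in> A" "Inr (orb \<alpha> (\<sigma> c)) \<in> A"
      using arcs arc c(1) diagram_closed(1)[OF c(1)] by blast+
    ultimately show ?thesis
      unfolding fat_move_def using band by blast
  qed
  have "finite ?Eg"
    using diagram unfolding link_diagram_def fvg_edges_def map_vertices_def by simp
  then have "reach ?mv (?Seg - ?Eg) ((?Seg - ?Eg) \<union> ?Eg)"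
    using band_move by (rule reach_union)
  moreover have "(?Seg - ?Eg) \<union> ?Eg = ?Seg"
    unfolding fvg_segments_def fvg_edges_def by blast
  ultimately show ?thesis
    unfolding fat_colorable_def by auto
qed

lemma card_covered_strands_arcs:
  assumes "A \<subseteq> Inr ` map_edges H \<alpha>" and "finite A"
  shows "card (covered_strands H \<sigma> \<alpha> Ov A) \<le> card A"
proof -
  have arc_strands: "card (strand H \<sigma> \<alpha> Ov ` segment_darts a) \<le> 1" if a: "a \<in> A" for a
  proof -
    obtain h where "h \<in> H" "a = Inr (orb \<alpha> h)"
      using assms(1) a unfolding map_edges_def by blast
    then show ?thesis
      by (simp add: strands_orb_alpha)
  qed
  have "card (covered_strands H \<sigma> \<alpha> Ov A) \<le> (\<Sum>a\<in>A. card (strand H \<sigma> \<alpha> Ov ` segment_darts a))"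
    unfolding covered_strands_def image_Union image_image by (rule card_UN_le[OF assms(2)])
  also have "\<dots> \<le> (\<Sum>a\<in>A. 1)"
    by (intro sum_mono arc_strands)
  also have "\<dots> = card A"
    by simp
  finally show ?thesis .
qed

lemma diagram_colorable_of_fat_colorable:
  assumes "fat_colorable (fvg_segments H \<sigma> \<alpha>) (fvg_edges H \<sigma>) (fvg_ends H \<sigma> \<alpha> Sh) fvg_inc k"
  obtains k' where "k' \<le> k" and "diagram_colorable H \<sigma> \<alpha> Ov k'"
proof -
  let ?Seg = "fvg_segments H \<sigma> \<alpha>" and ?Eg = "fvg_edges H \<sigma>"
  let ?mv = "fat_move ?Seg ?Eg (fvg_ends H \<sigma> \<alpha> Sh) fvg_inc"
  let ?C = "covered_strands H \<sigma> \<alpha> Ov"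
  obtain A0 where A0: "A0 \<subseteq> ?Seg - ?Eg" "card A0 = k" "reach ?mv A0 ?Seg"
    using assms unfolding fat_colorable_def by blast
  have arcs: "A0 \<subseteq> Inr ` map_edges H \<alpha>"
    using A0(1) unfolding fvg_segments_def fvg_edges_def by blast
  have "finite A0"
    using diagram finite_subset[OF arcs] unfolding link_diagram_def map_edges_def by blast
  have "A0 \<noteq> {}"
  proof
    assume empty: "A0 = {}"
    have "?Seg = {}"
    proof (rule reach_from_empty)
      show "reach ?mv {} ?Seg"
        using A0(3) empty by simp
      show "\<not> ?mv {} s" for s
        unfolding fat_move_def by blast
    qed
    moreover obtain h where "h \<in> H"
      using diagram unfolding link_diagram_def by blast
    ultimately show False
      unfolding fvg_segments_def map_edges_def by blast
  qed
  then obtain h where "Inr (orb \<alpha> h) \<in> A0"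
    using arcs unfolding map_edges_def by blast
  then have "strand H \<sigma> \<alpha> Ov h \<in> ?C A0"
    by (rule covered_strandsI) (simp add: orb_self)
  then have "?C A0 \<noteq> {}"
    by blast
  moreover have "?C A0 \<subseteq> strands H \<sigma> \<alpha> Ov"
    using covered_strands_mono[of A0 ?Seg] A0(1) covered_strands_fvg_segments by blast
  moreover have "reach (diagram_move H \<sigma> \<alpha> Ov) (?C A0) (strands H \<sigma> \<alpha> Ov)"
    using reach_simulation[OF A0(3) fat_move_covered_strands] covered_strands_fvg_segments
    by simp
  ultimately have "diagram_colorable H \<sigma> \<alpha> Ov (card (?C A0))"
    unfolding diagram_colorable_def by blast
  moreover have "card (?C A0) \<le> k"
    using card_covered_strands_arcs[OF arcs \<open>finite A0\<close>] A0(2) by simp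
  ultimately show ?thesis
    by (rule that[rotated])
qed

end

theorem lemma4p4:
  fixes H :: "'h set" and \<sigma> \<alpha> :: "'h \<Rightarrow> 'h" and Ov Sh :: "'h set"
  assumes "link_diagram H \<sigma> \<alpha> Ov"
    and "checkerboard H \<sigma> \<alpha> Sh"
  shows "wirtinger_fvg H \<sigma> \<alpha> Sh \<ge> wirtinger_diagram H \<sigma> \<alpha> Ov"
proof -
  have "fat_colorable (fvg_segments H \<sigma> \<alpha>) (fvg_edges H \<sigma>) (fvg_ends H \<sigma> \<alpha> Sh) fvg_inc
      (wirtinger_fvg H \<sigma> \<alpha> Sh)"
    unfolding wirtinger_fvg_def wirtinger_fat_def
    using fat_colorable_by_arcs[OF assms] by (rule LeastI)
  then obtain k where "k \<le> wirtinger_fvg H \<sigma> \<alpha> Sh" and "diagram_colorable H \<sigma> \<alpha> Ov k"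
    by (rule diagram_colorable_of_fat_colorable[OF assms(1)])
  moreover from \<open>diagram_colorable H \<sigma> \<alpha> Ov k\<close> have "wirtinger_diagram H \<sigma> \<alpha> Ov \<le> k"
    unfolding wirtinger_diagram_def by (rule Least_le)
  ultimately show ?thesis
    by simp
qed

end
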